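(* Suppose $F(i)=(i+1/2)^a$ on $[-1/2,1/2]$ for some $a>0$, and $q_1=q_2=Q$. Then for every threshold $R\in(0,1)$: (i) $\Delta_S^B=0$ if $a=1$; (ii) $\Delta_S^B<0$ if $a>1$; (iii) $\Delta_S^B>0$ if $a<1$.
   Context: Setting. Consumer types are $i\in[-1/2,1/2]$ with cumulative distribution function $F$. A product has a quality vector $(Q_1,Q_2)\in\{0,1\}^2$; a type-$i$ consumer gets payoff $(1/2+i)Q_1+(1/2-i)Q_2$. The versions $(1,1),(1,0),(0,1),(0,0)$ have prior probabilities $q_H,q_1,q_2,q_L$, all strictly positive and summing to $1$. Given a threshold $R\in(0,1)$, a sender with type drawn from $F$ gives a buy recommendation if her payoff from the product is at least $R$. Let $\phi_1(R)=1-F(R-1/2)$, $\phi_2(R)=F(1/2-R)$, $\pi^B=q_H+q_1\phi_1(R)+q_2\phi_2(R)$, and posteriors after a buy recommendation $p^B_1=q_1\phi_1(R)/\pi^B$, $p^B_2=q_2\phi_2(R)/\pi^B$. The subjective effect of the buy recommendation is $\Delta_S^B=(p_2^B-q_2)-(p_1^B-q_1)$. *)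

theory Defs
  imports Complex_Main
begin

definition phi1 :: "(real \<Rightarrow> real) \<Rightarrow> real \<Rightarrow> real" where
  "phi1 F R = 1 - F (R - 1/2)"

definition phi2 :: "(real \<Rightarrow> real) \<Rightarrow> real \<Rightarrow> real" where
  "phi2 F R = F (1/2 - R)"

definition piB :: "(real \<Rightarrow> real) \<Rightarrow> real \<Rightarrow> real \<Rightarrow> real \<Rightarrow> real \<Rightarrow> real" where
  "piB F qH q1 q2 R = qH + q1 * phi1 F R + q2 * phi2 F R"

definition pB1 :: "(real \<Rightarrow> real) \<Rightarrow> real \<Rightarrow> real \<Rightarrow> real \<Rightarrow> real \<Rightarrow> real" where
  "pB1 F qH q1 q2 R = q1 * phi1 F R / piB F qH q1 q2 R"

definition pB2 :: "(real \<Rightarrow> real) \<Rightarrow> real \<Rightarrow> real \<Rightarrow> real \<Rightarrow> real \<Rightarrow> real" where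
  "pB2 F qH q1 q2 R = q2 * phi2 F R / piB F qH q1 q2 R"

definition DeltaSB :: "(real \<Rightarrow> real) \<Rightarrow> real \<Rightarrow> real \<Rightarrow> real \<Rightarrow> real \<Rightarrow> real" where
  "DeltaSB F qH q1 q2 R = (pB2 F qH q1 q2 R - q2) - (pB1 F qH q1 q2 R - q1)"

end

theory Submission
  imports Defs
begin

text \<open>With equal prior weights Q on the two one-dimensional versions, the buy recommendation
  changes the posterior gap by Q (phi2 - phi1) / piB, so the sign of the subjective effect is the
  sign of phi2 - phi1. For the power CDF F(i) = (i + 1/2)^a one has phi1 = 1 - R^a and
  phi2 = (1 - R)^a, hence that sign is the sign of R^a + (1 - R)^a - 1: zero for a = 1, and
  negative (positive) for a > 1 (a < 1) because x^a lies below (above) x on the open unit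
  interval.\<close>

lemma DeltaSB_equal_weights:
  "DeltaSB F qH Q Q R = Q * (phi2 F R - phi1 F R) / piB F qH Q Q R"
  unfolding DeltaSB_def pB1_def pB2_def by (simp add: diff_divide_distrib right_diff_distrib)

lemma piB_pos:
  assumes "qH > 0" "q1 \<ge> 0" "q2 \<ge> 0" "phi1 F R \<ge> 0" "phi2 F R \<ge> 0"
  shows "piB F qH q1 q2 R > 0"
  unfolding piB_def using assms by (simp add: add_pos_nonneg)

lemma sgn_DeltaSB_equal_weights:
  assumes "Q > 0" "piB F qH Q Q R > 0"
  shows "sgn (DeltaSB F qH Q Q R) = sgn (phi2 F R - phi1 F R)"
  using assms by (simp add: DeltaSB_equal_weights sgn_mult sgn_divide)

lemma
  assumes "\<forall>i \<in> {-1/2..1/2}. F i = (i + 1/2) powr a" "0 \<le> R" "R \<le> 1"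
  shows phi1_powr_cdf: "phi1 F R = 1 - R powr a"
    and phi2_powr_cdf: "phi2 F R = (1 - R) powr a"
  using assms by (simp_all add: phi1_def phi2_def)

lemma powr_add_complement_less_one:
  fixes x a :: real
  assumes "0 < x" "x < 1" "a > 1"
  shows "x powr a + (1 - x) powr a < 1"
  using powr_less_mono'[of x 1 a] powr_less_mono'[of "1 - x" 1 a] assms by simp

lemma powr_add_complement_greater_one:
  fixes x a :: real
  assumes "0 < x" "x < 1" "a < 1"
  shows "x powr a + (1 - x) powr a > 1"
  using powr_less_mono'[of x a 1] powr_less_mono'[of "1 - x" a 1] assms by simp

theorem corollary2:
  fixes F :: "real \<Rightarrow> real" and a qH Q qL R :: real
  assumes hF: "\<forall>i \<in> {-1/2..1/2}. F i = (i + 1/2) powr a"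
    and ha: "a > 0"
    and hqH: "qH > 0" and hQ: "Q > 0" and hqL: "qL > 0"
    and hsum: "qH + Q + Q + qL = 1"
    and hR: "0 < R" "R < 1"
  shows "(a = 1 \<longrightarrow> DeltaSB F qH Q Q R = 0)
       \<and> (a > 1 \<longrightarrow> DeltaSB F qH Q Q R < 0)
       \<and> (a < 1 \<longrightarrow> DeltaSB F qH Q Q R > 0)"
proof -
  have phi1: "phi1 F R = 1 - R powr a" and phi2: "phi2 F R = (1 - R) powr a"
    using phi1_powr_cdf[OF hF] phi2_powr_cdf[OF hF] hR by auto
  have "R powr a \<le> 1"
    using hR ha by (intro powr_le1) auto
  then have "piB F qH Q Q R > 0"
    using hqH hQ by (intro piB_pos) (simp_all add: phi1 phi2)
  then have sign: "sgn (DeltaSB F qH Q Q R) = sgn (R powr a + (1 - R) powr a - 1)"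
    using hQ by (simp add: sgn_DeltaSB_equal_weights phi1 phi2 algebra_simps)
  show ?thesis
    using sign hR powr_add_complement_less_one[of R a] powr_add_complement_greater_one[of R a]
    by (auto simp: sgn_if split: if_splits)
qed

end
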